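(* Consider the voter model with zealots on the complete graph with $n$ nodes, $z_0$ zealots holding opinion $0$ and $z_1$ zealots holding opinion $1$, where $z_0+z_1>0$. Let $N_1(t)$ be the number of opinion-1 holders at time $t$ (including 1-zealots), a continuous-time Markov chain on $\mathcal{S}=\{z_1,\ldots,n-z_0\}$, and let $\boldsymbol{\pi}=(\pi_k)_{k\in\mathcal{S}}$ be its stationary distribution, i.e. the probability vector on $\mathcal{S}$ satisfying $\boldsymbol{\pi}Q=0$, where $Q$ is the transition rate matrix with $q_{k,k-1}=(k-z_1)(n-k)/(n-1)$, $q_{k,k+1}=k(n-k-z_0)/(n-1)$, $q_{k,k}=-q_{k,k-1}-q_{k,k+1}$ and all other entries zero. Then the expected number of opinion-1 holders at equilibrium is $$\mathbb{E}_{\boldsymbol{\pi}}N_1=\sum_{k\in\mathcal{S}}k\,\pi_k=n\,\frac{z_1}{z_0+z_1}.$$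
   Context: Model: $n$ users are the nodes of a complete graph without self-loops, each holding opinion $0$ or $1$. Among them, $z_0\ge 0$ are 0-zealots (always hold opinion 0) and $z_1\ge0$ are 1-zealots (always hold opinion 1), with $z_0+z_1>0$ and $z_0+z_1\le n$; the remaining users are non-zealots. Each user has an independent exponential clock of rate 1; when a non-zealot's clock rings, that user picks one of the other $n-1$ users uniformly at random and adopts their current opinion; zealots never change opinion. $N_1(t)$ counts users holding opinion 1 at time $t$, including 1-zealots; it is a birth-and-death chain on $\mathcal{S}$ with the rates given in the claim. *)

theory Defs
  imports Complex_Main
begin

definition vz_states :: "nat \<Rightarrow> nat \<Rightarrow> nat \<Rightarrow> nat set" where
  "vz_states n z0 z1 = {z1 .. n - z0}"

definition vz_rate :: "nat \<Rightarrow> nat \<Rightarrow> nat \<Rightarrow> nat \<Rightarrow> nat \<Rightarrow> real" where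
  "vz_rate n z0 z1 k j =
     (let down = (real k - real z1) * (real n - real k) / (real n - 1);
          up = real k * (real n - real k - real z0) / (real n - 1)
      in if int j = int k - 1 then down
         else if j = k + 1 then up
         else if j = k then - down - up
         else 0)"

definition vz_stationary :: "nat \<Rightarrow> nat \<Rightarrow> nat \<Rightarrow> (nat \<Rightarrow> real) \<Rightarrow> bool" where
  "vz_stationary n z0 z1 p \<longleftrightarrow>
     (\<forall>k\<in>vz_states n z0 z1. p k \<ge> 0) \<and>
     (\<Sum>k\<in>vz_states n z0 z1. p k) = 1 \<and>
     (\<forall>j\<in>vz_states n z0 z1. (\<Sum>k\<in>vz_states n z0 z1. p k * vz_rate n z0 z1 k j) = 0)"

end

theory Submission
  imports Defs
begin

text \<open>Stationarity gives \<open>\<pi> Q f = 0\<close> for every observable \<open>f\<close>. Taking \<open>f k = k\<close>,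
  the drift \<open>(Q f) k = (z\<^sub>1 n - (z\<^sub>0 + z\<^sub>1) k) / (n - 1)\<close> is affine in \<open>k\<close>, so
  \<open>\<pi> Q f = 0\<close> becomes the linear equation \<open>z\<^sub>1 n - (z\<^sub>0 + z\<^sub>1) E\<^sub>\<pi> N\<^sub>1 = 0\<close>.\<close>

lemma stationary_generator_expectation_eq_0:
  fixes Q :: "'a \<Rightarrow> 'a \<Rightarrow> real"
  assumes "finite S" and "\<forall>j\<in>S. (\<Sum>k\<in>S. p k * Q k j) = 0"
  shows "(\<Sum>k\<in>S. p k * (\<Sum>j\<in>S. Q k j * f j)) = 0"
proof -
  have "(\<Sum>k\<in>S. p k * (\<Sum>j\<in>S. Q k j * f j)) = (\<Sum>j\<in>S. f j * (\<Sum>k\<in>S. p k * Q k j))"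
    unfolding sum_distrib_left by (subst sum.swap) (simp add: mult_ac)
  also have "\<dots> = 0"
    using assms(2) by simp
  finally show ?thesis .
qed

lemma vz_rate_eq_0_far:
  assumes "j \<notin> {k - 1..k + 1}"
  shows "vz_rate n z0 z1 k j = 0"
  using assms by (auto simp: vz_rate_def Let_def)

lemma vz_rate_eq_0_outside_states:
  assumes "z0 + z1 \<le> n" and "k \<in> vz_states n z0 z1" and "j \<notin> vz_states n z0 z1"
  shows "vz_rate n z0 z1 k j = 0"
proof -
  have "j = k - 1 \<Longrightarrow> k = z1" and "j = k + 1 \<Longrightarrow> k = n - z0" and "j \<noteq> k"
    using assms(2,3) by (auto simp: vz_states_def)
  then show ?thesis
    using assms(1) by (auto simp: vz_rate_def Let_def of_nat_diff)
qed

lemma vz_drift: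
  assumes "z0 + z1 \<le> n" and k: "k \<in> vz_states n z0 z1"
  shows "(\<Sum>j\<in>vz_states n z0 z1. vz_rate n z0 z1 k j * real j)
    = (real z1 * real n - real k * (real z0 + real z1)) / (real n - 1)"
proof -
  define down where "down = (real k - real z1) * (real n - real k) / (real n - 1)"
  define up where "up = real k * (real n - real k - real z0) / (real n - 1)"
  have "(\<Sum>j\<in>vz_states n z0 z1. vz_rate n z0 z1 k j * real j)
      = (\<Sum>j\<in>{k - 1..k + 1}. vz_rate n z0 z1 k j * real j)"
    by (rule sum.same_carrierI[where C = "vz_states n z0 z1 \<union> {k - 1..k + 1}"])
      (simp_all add: vz_states_def, auto simp: vz_rate_eq_0_far
        vz_rate_eq_0_outside_states[OF assms, unfolded vz_states_def])
  also have "\<dots> = up - down"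
  proof (cases "k = 0")
    case True
    then have "z1 = 0"
      using k by (simp add: vz_states_def)
    with True show ?thesis
      by (simp add: vz_rate_def up_def down_def atLeast0_atMost_Suc)
  next
    case False
    then have "{k - 1..k + 1} = {k - 1, k, k + 1}" and "int (k - 1) = int k - 1"
      and "real (k - 1) = real k - 1"
      by (auto simp: of_nat_diff)
    with False have "(\<Sum>j\<in>{k - 1..k + 1}. vz_rate n z0 z1 k j * real j)
        = down * (real k - 1) + (- down - up) * real k + up * (real k + 1)"
      by (simp add: vz_rate_def Let_def flip: up_def down_def)
    then show ?thesis
      by (simp add: algebra_simps)
  qed
  also have "\<dots> = (real z1 * real n - real k * (real z0 + real z1)) / (real n - 1)"
    unfolding up_def down_def diff_divide_distrib[symmetric] by (simp add: algebra_simps)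
  finally show ?thesis .
qed

lemma vz_stationary_mean_balance:
  assumes "0 < z0 + z1" and "z0 + z1 \<le> n" and stat: "vz_stationary n z0 z1 p"
  shows "(real z0 + real z1) * (\<Sum>k\<in>vz_states n z0 z1. real k * p k) = real z1 * real n"
proof (cases "n = 1")
  case True
  \<comment> \<open>all rates divide by \<open>n - 1 = 0\<close>, but then \<open>S\<close> is a single state\<close>
  then have "vz_states n z0 z1 = {z1}" and "real z0 + real z1 = 1"
    using assms(1,2) by (auto simp: vz_states_def)
  with True stat show ?thesis
    by (simp add: vz_stationary_def)
next
  case False
  let ?S = "vz_states n z0 z1"
  have "real n - 1 > 0"
    using False assms(1,2) by auto
  have mass: "(\<Sum>k\<in>?S. p k) = 1"
    using stat by (simp add: vz_stationary_def)
  have "0 = (\<Sum>k\<in>?S. p k * (\<Sum>j\<in>?S. vz_rate n z0 z1 k j * real j))"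
    using stat by (intro stationary_generator_expectation_eq_0[symmetric])
      (auto simp: vz_stationary_def vz_states_def)
  also have "\<dots> = (\<Sum>k\<in>?S. p k * ((real z1 * real n - real k * (real z0 + real z1)) / (real n - 1)))"
    by (intro sum.cong) (simp_all add: vz_drift assms(2))
  also have "\<dots> = (\<Sum>k\<in>?S. p k * (real z1 * real n) - (real z0 + real z1) * (real k * p k)) / (real n - 1)"
    unfolding sum_divide_distrib by (intro sum.cong) (simp_all add: algebra_simps)
  also have "\<dots> = (real z1 * real n - (real z0 + real z1) * (\<Sum>k\<in>?S. real k * p k)) / (real n - 1)"
    by (simp add: sum_subtractf sum_distrib_left mass flip: sum_distrib_right)
  finally show ?thesis
    using \<open>real n - 1 > 0\<close> by simp
qed

theorem theorem3:
  fixes n z0 z1 :: nat and p :: "nat \<Rightarrow> real"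
  assumes "z0 + z1 > 0" and "z0 + z1 \<le> n"
    and "vz_stationary n z0 z1 p"
  shows "(\<Sum>k\<in>vz_states n z0 z1. real k * p k) = real n * real z1 / real (z0 + z1)"
proof -
  have "real z0 + real z1 > 0"
    using assms(1) by linarith
  with vz_stationary_mean_balance[OF assms] show ?thesis
    by (simp add: field_simps)
qed

end
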